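(* For all $P,Q\in\Gamma_n$, $$0\le M_{SA}(P\|Q)\le \tfrac14 \Delta(P\|Q)\qquad\text{and}\qquad 0\le \xi_{SA}(P\|Q)\le \tfrac14\xi_{\Delta}(P\|Q).$$
   Context: $\Gamma_n=\{P=(p_1,\dots,p_n): p_i>0,\ \sum_i p_i=1\}$, $n\ge2$. For $f:(0,\infty)\to\mathbb{R}$, $C_f(P\|Q)=\sum_{i=1}^n q_i f(p_i/q_i)$; for differentiable $f$, $E_f(P\|Q)=\sum_{i=1}^n (p_i-q_i) f'(p_i/q_i)$ and $\xi_f=E_f-C_f$. With $f_{SA}(x)=\sqrt{(x^2+1)/2}-\frac{x+1}{2}$ and $f_\Delta(x)=\frac{(x-1)^2}{x+1}$: $M_{SA}=C_{f_{SA}}=\sum_i\sqrt{(p_i^2+q_i^2)/2}-1$, $\Delta=C_{f_\Delta}=\sum_i\frac{(p_i-q_i)^2}{p_i+q_i}$, $\xi_{SA}=\xi_{f_{SA}}$, $\xi_\Delta=\xi_{f_\Delta}$. *)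

theory Defs
  imports "HOL-Analysis.Analysis"
begin

definition Gamma :: "nat \<Rightarrow> (nat \<Rightarrow> real) set" where
  "Gamma n = {p. (\<forall>i<n. p i > 0) \<and> (\<Sum>i<n. p i) = 1}"

definition Cf :: "(real \<Rightarrow> real) \<Rightarrow> nat \<Rightarrow> (nat \<Rightarrow> real) \<Rightarrow> (nat \<Rightarrow> real) \<Rightarrow> real" where
  "Cf f n p q = (\<Sum>i<n. q i * f (p i / q i))"

definition Ef :: "(real \<Rightarrow> real) \<Rightarrow> nat \<Rightarrow> (nat \<Rightarrow> real) \<Rightarrow> (nat \<Rightarrow> real) \<Rightarrow> real" where
  "Ef f n p q = (\<Sum>i<n. (p i - q i) * deriv f (p i / q i))"

definition xi_f :: "(real \<Rightarrow> real) \<Rightarrow> nat \<Rightarrow> (nat \<Rightarrow> real) \<Rightarrow> (nat \<Rightarrow> real) \<Rightarrow> real" where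
  "xi_f f n p q = Ef f n p q - Cf f n p q"

definition f_SA :: "real \<Rightarrow> real" where
  "f_SA x = sqrt ((x^2 + 1) / 2) - (x + 1) / 2"

definition f_Delta :: "real \<Rightarrow> real" where
  "f_Delta x = (x - 1)^2 / (x + 1)"

definition M_SA where "M_SA = Cf f_SA"
definition Delta where "Delta = Cf f_Delta"
definition xi_SA where "xi_SA = xi_f f_SA"
definition xi_Delta where "xi_Delta = xi_f f_Delta"

end

theory Submission
  imports Defs
begin

text \<open>Both \<open>\<xi>\<^sub>f\<close> and \<open>C\<^sub>f\<close> are sums of \<open>q\<^sub>i g(p\<^sub>i/q\<^sub>i)\<close>: for \<open>\<xi>\<^sub>f\<close> the generator is
  \<open>g(x) = (x - 1) f'(x) - f(x)\<close>. So all four inequalities reduce to pointwise inequalities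
  between generators on \<open>x > 0\<close>. Writing \<open>s = sqrt((x\<^sup>2+1)/2)\<close> and \<open>a = (x+1)/2\<close>, the
  quadratic-mean/arithmetic-mean inequality gives \<open>s \<ge> a > 0\<close>, and
  \<open>f\<^sub>S\<^sub>A(x) = s - a = (x-1)\<^sup>2 / (4(s+a))\<close>; its \<open>\<xi>\<close>-generator is \<open>(s-a)/s = f\<^sub>S\<^sub>A(x)/s\<close>, while that
  of \<open>f\<^sub>\<Delta>\<close> is \<open>2(x-1)\<^sup>2/(x+1)\<^sup>2\<close>. The bounds then follow from \<open>s + a \<ge> 2a\<close> and
  \<open>s(s+a) \<ge> 2a\<^sup>2\<close>.\<close>

definition xi_generator :: "(real \<Rightarrow> real) \<Rightarrow> real \<Rightarrow> real" where
  "xi_generator f x = (x - 1) * deriv f x - f x"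

lemma xi_f_eq_Cf_xi_generator:
  assumes "\<And>i. i < n \<Longrightarrow> q i > 0"
  shows "xi_f f n p q = Cf (xi_generator f) n p q"
  unfolding xi_f_def Ef_def Cf_def xi_generator_def sum_subtractf[symmetric]
proof (intro sum.cong refl)
  fix i assume "i \<in> {..<n}"
  then have "q i > 0"
    using assms by simp
  then show "(p i - q i) * deriv f (p i / q i) - q i * f (p i / q i) =
      q i * ((p i / q i - 1) * deriv f (p i / q i) - f (p i / q i))"
    by (simp add: field_simps)
qed

lemma Cf_divide: "Cf (\<lambda>x. g x / c) n p q = Cf g n p q / c"
  unfolding Cf_def by (simp add: sum_divide_distrib)

lemma Cf_nonneg:
  assumes "\<And>i. i < n \<Longrightarrow> p i > 0" "\<And>i. i < n \<Longrightarrow> q i > 0"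
    and "\<And>x. x > 0 \<Longrightarrow> 0 \<le> f x"
  shows "0 \<le> Cf f n p q"
  unfolding Cf_def using assms by (intro sum_nonneg mult_nonneg_nonneg) (auto simp: less_imp_le)

lemma Cf_mono:
  assumes "\<And>i. i < n \<Longrightarrow> p i > 0" "\<And>i. i < n \<Longrightarrow> q i > 0"
    and "\<And>x. x > 0 \<Longrightarrow> f x \<le> g x"
  shows "Cf f n p q \<le> Cf g n p q"
  unfolding Cf_def using assms by (intro sum_mono mult_left_mono) (auto simp: less_imp_le)

lemma arith_mean_le_quadratic_mean:
  fixes x y :: real
  shows "(x + y) / 2 \<le> sqrt ((x\<^sup>2 + y\<^sup>2) / 2)"
proof (rule real_le_rsqrt)
  show "((x + y) / 2)\<^sup>2 \<le> (x\<^sup>2 + y\<^sup>2) / 2"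
    using sum_squares_ge_zero[of "x - y" 0] by (simp add: power2_eq_square field_simps)
qed

lemma has_real_derivative_f_SA:
  "(f_SA has_real_derivative x / (2 * sqrt ((x\<^sup>2 + 1) / 2)) - 1 / 2) (at x)"
proof -
  have pos: "(x\<^sup>2 + 1) / 2 > 0"
    by (simp add: add_nonneg_pos)
  have "(f_SA has_real_derivative
      inverse (sqrt ((x\<^sup>2 + 1) / 2)) / 2 * ((2 * x ^ 1 * 1 + 0) / 2) - (1 + 0) / 2) (at x)"
    unfolding f_SA_def[abs_def]
    by (rule derivative_eq_intros refl | use pos in simp)+
  then show ?thesis
    by (simp add: field_simps)
qed

lemma has_real_derivative_f_Delta:
  assumes "x \<noteq> -1"
  shows "(f_Delta has_real_derivative (x - 1) * (x + 3) / (x + 1)\<^sup>2) (at x)"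
proof -
  have ne: "x + 1 \<noteq> 0"
    using assms by linarith
  have "(f_Delta has_real_derivative
      (2 * (x - 1) ^ 1 * (1 - 0) * (x + 1) - (x - 1)\<^sup>2 * (1 + 0)) / ((x + 1) * (x + 1))) (at x)"
    unfolding f_Delta_def[abs_def]
    by (rule derivative_eq_intros refl | use ne in simp)+
  then show ?thesis
    using ne by (simp add: field_simps power2_eq_square)
qed

lemma f_SA_eq:
  fixes x :: real
  assumes "x > -1"
  shows "f_SA x = (x - 1)\<^sup>2 / (4 * (sqrt ((x\<^sup>2 + 1) / 2) + (x + 1) / 2))"
proof -
  define s where "s = sqrt ((x\<^sup>2 + 1) / 2)"
  define a where "a = (x + 1) / 2"
  have "s \<ge> a"
    using arith_mean_le_quadratic_mean[of x 1] unfolding s_def a_def by simp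
  moreover have "a > 0"
    using assms unfolding a_def by simp
  ultimately have "s + a > 0"
    by linarith
  have "s\<^sup>2 = (x\<^sup>2 + 1) / 2"
    unfolding s_def by (simp add: add_nonneg_pos)
  then have "(s - a) * (s + a) = (x - 1)\<^sup>2 / 4"
    unfolding a_def by (simp add: power2_eq_square field_simps)
  with \<open>s + a > 0\<close> have "s - a = (x - 1)\<^sup>2 / (4 * (s + a))"
    by (simp add: field_simps)
  then show ?thesis
    unfolding f_SA_def s_def a_def .
qed

lemma f_SA_nonneg: "0 \<le> f_SA x"
  using arith_mean_le_quadratic_mean[of x 1] unfolding f_SA_def by simp

lemma f_SA_le_f_Delta:
  assumes "x > -1"
  shows "f_SA x \<le> f_Delta x / 4"
proof -
  define s where "s = sqrt ((x\<^sup>2 + 1) / 2)"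
  define a where "a = (x + 1) / 2"
  have "a \<le> s"
    using arith_mean_le_quadratic_mean[of x 1] unfolding s_def a_def by simp
  have "a > 0"
    using assms unfolding a_def by simp
  have "8 * a = (x + 1) * 4"
    unfolding a_def by simp
  have "f_SA x = (x - 1)\<^sup>2 / (4 * (s + a))"
    unfolding f_SA_eq[OF assms] s_def a_def ..
  also have "\<dots> \<le> (x - 1)\<^sup>2 / (8 * a)"
    using \<open>a \<le> s\<close> \<open>a > 0\<close> by (intro divide_left_mono) auto
  also have "\<dots> = f_Delta x / 4"
    unfolding f_Delta_def \<open>8 * a = (x + 1) * 4\<close> by simp
  finally show ?thesis .
qed

lemma xi_generator_f_SA:
  "xi_generator f_SA x = f_SA x / sqrt ((x\<^sup>2 + 1) / 2)"
proof -
  define s where "s = sqrt ((x\<^sup>2 + 1) / 2)"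
  have "s > 0"
    unfolding s_def by (simp add: add_nonneg_pos)
  have "s\<^sup>2 = (x\<^sup>2 + 1) / 2"
    unfolding s_def by (simp add: add_nonneg_pos)
  have "xi_generator f_SA x = (x - 1) * (x / (2 * s) - 1 / 2) - (s - (x + 1) / 2)"
    unfolding xi_generator_def DERIV_imp_deriv[OF has_real_derivative_f_SA] f_SA_def s_def by simp
  also have "\<dots> = (x\<^sup>2 + 1 - 2 * s\<^sup>2) / (2 * s) + (s - (x + 1) / 2) / s"
    using \<open>s > 0\<close> by (simp add: field_simps power2_eq_square)
  also have "\<dots> = (s - (x + 1) / 2) / s"
    using \<open>s\<^sup>2 = (x\<^sup>2 + 1) / 2\<close> by simp
  finally show ?thesis
    unfolding f_SA_def s_def .
qed

lemma xi_generator_f_Delta: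
  assumes "x \<noteq> -1"
  shows "xi_generator f_Delta x = 2 * (x - 1)\<^sup>2 / (x + 1)\<^sup>2"
proof -
  have "x + 1 \<noteq> 0"
    using assms by linarith
  then show ?thesis
    unfolding xi_generator_def DERIV_imp_deriv[OF has_real_derivative_f_Delta[OF assms]] f_Delta_def
    by (simp add: divide_simps power2_eq_square) (simp add: algebra_simps)
qed

lemma xi_generator_f_SA_nonneg: "0 \<le> xi_generator f_SA x"
  unfolding xi_generator_f_SA using f_SA_nonneg by simp

lemma xi_generator_f_SA_le_f_Delta:
  assumes "x > -1"
  shows "xi_generator f_SA x \<le> xi_generator f_Delta x / 4"
proof -
  define s where "s = sqrt ((x\<^sup>2 + 1) / 2)"
  define a where "a = (x + 1) / 2"
  have "s \<ge> a"
    using arith_mean_le_quadratic_mean[of x 1] unfolding s_def a_def by simp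
  have "a > 0"
    using assms unfolding a_def by simp
  have "a * a \<le> s * s" "a * a \<le> s * a"
    using \<open>s \<ge> a\<close> \<open>a > 0\<close> by (intro mult_mono mult_right_mono; simp)+
  then have "8 * a\<^sup>2 \<le> 4 * (s * (s + a))"
    by (simp add: power2_eq_square algebra_simps)
  with \<open>s \<ge> a\<close> \<open>a > 0\<close> have "(x - 1)\<^sup>2 / (4 * (s * (s + a))) \<le> (x - 1)\<^sup>2 / (8 * a\<^sup>2)"
    by (intro divide_left_mono) auto
  moreover have "xi_generator f_SA x = (x - 1)\<^sup>2 / (4 * (s * (s + a)))"
    unfolding xi_generator_f_SA f_SA_eq[OF assms] s_def a_def by (simp add: mult.commute)
  moreover have "xi_generator f_Delta x / 4 = (x - 1)\<^sup>2 / (8 * a\<^sup>2)"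
    unfolding xi_generator_f_Delta[OF less_imp_neq[OF assms, symmetric]] a_def
    by (simp add: power_divide)
  ultimately show ?thesis
    by simp
qed

theorem proposition5p2:
  fixes n :: nat and P Q :: "nat \<Rightarrow> real"
  assumes "n \<ge> 2" and "P \<in> Gamma n" and "Q \<in> Gamma n"
  shows "0 \<le> M_SA n P Q \<and> M_SA n P Q \<le> Delta n P Q / 4 \<and>
         0 \<le> xi_SA n P Q \<and> xi_SA n P Q \<le> xi_Delta n P Q / 4"
proof -
  have P: "\<And>i. i < n \<Longrightarrow> P i > 0" and Q: "\<And>i. i < n \<Longrightarrow> Q i > 0"
    using assms(2,3) unfolding Gamma_def by auto
  have xi_SA_eq: "xi_SA n P Q = Cf (xi_generator f_SA) n P Q"
    and xi_Delta_eq: "xi_Delta n P Q = Cf (xi_generator f_Delta) n P Q"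
    unfolding xi_SA_def xi_Delta_def by (simp_all only: xi_f_eq_Cf_xi_generator[OF Q])
  have "0 \<le> M_SA n P Q"
    unfolding M_SA_def by (rule Cf_nonneg[OF P Q f_SA_nonneg])
  moreover have "M_SA n P Q \<le> Delta n P Q / 4"
    unfolding M_SA_def Delta_def Cf_divide[symmetric]
    using P Q f_SA_le_f_Delta by (rule Cf_mono) auto
  moreover have "0 \<le> xi_SA n P Q"
    unfolding xi_SA_eq by (rule Cf_nonneg[OF P Q xi_generator_f_SA_nonneg])
  moreover have "xi_SA n P Q \<le> xi_Delta n P Q / 4"
    unfolding xi_SA_eq xi_Delta_eq Cf_divide[symmetric]
    using P Q xi_generator_f_SA_le_f_Delta by (rule Cf_mono) auto
  ultimately show ?thesis
    by blast
qed

end
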